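(* For all positive integers $p,q$, \[ L_e(p,q) \geq \sum_{i=1}^{\frac{(p-1)(p-2)}{2}+1} M_p(i)\, N_e(q)^i\, N_s(q)^{\frac{p(p-1)}{2}-i}\, 2^{\frac{pq(q-1)}{2}}. \]
   Context: All graphs are simple undirected labeled graphs on the vertex set $\{1,\dots,n\}$. For such a graph with adjacency matrix $W$ and degree matrix $D$, its Laplacian is $L = D - W$; if the graph has at least one edge, its normalized Laplacian matrix is $\frac{1}{\mathrm{Tr}(L)}L$, which is a density matrix (Hermitian, positive semidefinite, trace $1$). An $n\times n$ density matrix $\rho$ with $n=pq$ is separable in $\mathbb{C}^p\otimes\mathbb{C}^q$ if $\rho=\sum_i c_i\,\rho_i\otimes\eta_i$ (finite sum) where the $\rho_i$ are $p\times p$ density matrices, the $\eta_i$ are $q\times q$ density matrices, $c_i\ge 0$ and $\sum_i c_i=1$; otherwise it is entangled. $L_s(p,q)$ denotes the number of labeled graphs on $n=pq$ vertices with at least one edge whose normalized Laplacian matrix is separable in $\mathbb{C}^p\otimes\mathbb{C}^q$, and $L_e(p,q)$ the number of those whose normalized Laplacian is entangled; thus $L_s(p,q)+L_e(p,q)=L(pq):=2^{pq(pq-1)/2}-1$. A square matrix is line sum symmetric if for each $i$ its $i$-th row sum equals its $i$-th column sum. $N_s(n)$ denotes the number of $n\times n$ matrices with entries in $\{0,1\}$ that are line sum symmetric, and $N_e(n)=2^{n^2}-N_s(n)$ the number of $n\times n$ $0$-$1$ matrices that are not line sum symmetric. For positive integers $n$ and nonnegative integers $i$, $M_n(i)$ denotes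 the number of symmetric $n\times n$ matrices with entries in $\{0,1\}$, all diagonal entries $0$, exactly $2i$ nonzero entries, and at least one row containing exactly one entry equal to $1$ (equivalently, the number of labeled graphs on $n$ vertices with $i$ edges having at least one vertex of degree $1$). *)

theory Defs
  imports Complex_Main "HOL-Library.FuncSet"
begin

text \<open>An n x n complex matrix is represented by a function nat => nat => complex,
  only entries with indices < n are relevant (0-based indices).\<close>

definition hermitian_mat :: "nat \<Rightarrow> (nat \<Rightarrow> nat \<Rightarrow> complex) \<Rightarrow> bool" where
  "hermitian_mat n A \<longleftrightarrow> (\<forall>i<n. \<forall>j<n. A i j = cnj (A j i))"

definition psd_mat :: "nat \<Rightarrow> (nat \<Rightarrow> nat \<Rightarrow> complex) \<Rightarrow> bool" where
  "psd_mat n A \<longleftrightarrow> (\<forall>v :: nat \<Rightarrow> complex.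
      Re (\<Sum>i<n. \<Sum>j<n. cnj (v i) * A i j * v j) \<ge> 0)"

definition trace_mat :: "nat \<Rightarrow> (nat \<Rightarrow> nat \<Rightarrow> complex) \<Rightarrow> complex" where
  "trace_mat n A = (\<Sum>i<n. A i i)"

definition density_mat :: "nat \<Rightarrow> (nat \<Rightarrow> nat \<Rightarrow> complex) \<Rightarrow> bool" where
  "density_mat n A \<longleftrightarrow> hermitian_mat n A \<and> psd_mat n A \<and> trace_mat n A = 1"

text \<open>Separability in C^p (x) C^q, with the standard Kronecker identification
  of index a < p*q with the pair (a div q, a mod q).\<close>

definition separable :: "nat \<Rightarrow> nat \<Rightarrow> (nat \<Rightarrow> nat \<Rightarrow> complex) \<Rightarrow> bool" where
  "separable p q \<rho> \<longleftrightarrow> density_mat (p * q) \<rho> \<and>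
     (\<exists>(m::nat) (c :: nat \<Rightarrow> real) (\<rho>s :: nat \<Rightarrow> nat \<Rightarrow> nat \<Rightarrow> complex)
        (\<eta>s :: nat \<Rightarrow> nat \<Rightarrow> nat \<Rightarrow> complex).
        (\<forall>k<m. c k \<ge> 0 \<and> density_mat p (\<rho>s k) \<and> density_mat q (\<eta>s k)) \<and>
        (\<Sum>k<m. c k) = 1 \<and>
        (\<forall>a<p*q. \<forall>b<p*q. \<rho> a b =
            (\<Sum>k<m. complex_of_real (c k) * \<rho>s k (a div q) (b div q) * \<eta>s k (a mod q) (b mod q))))"

definition graphs :: "nat \<Rightarrow> nat set set set" where
  "graphs n = Pow {e. e \<subseteq> {1..n} \<and> card e = 2}"

definition degree :: "nat set set \<Rightarrow> nat \<Rightarrow> nat" where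
  "degree E v = card {e \<in> E. v \<in> e}"

text \<open>Laplacian L = D - W; matrix index a < n corresponds to vertex a+1.\<close>

definition laplacian :: "nat set set \<Rightarrow> nat \<Rightarrow> nat \<Rightarrow> complex" where
  "laplacian E a b =
     (if a = b then of_nat (degree E (a+1)) else 0) - (if {a+1, b+1} \<in> E then 1 else 0)"

definition normalized_laplacian :: "nat \<Rightarrow> nat set set \<Rightarrow> nat \<Rightarrow> nat \<Rightarrow> complex" where
  "normalized_laplacian n E a b = laplacian E a b / trace_mat n (laplacian E)"

definition L_s :: "nat \<Rightarrow> nat \<Rightarrow> nat" where
  "L_s p q = card {E \<in> graphs (p*q). E \<noteq> {} \<and>
                     separable p q (normalized_laplacian (p*q) E)}"

definition L_e :: "nat \<Rightarrow> nat \<Rightarrow> nat" where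
  "L_e p q = card {E \<in> graphs (p*q). E \<noteq> {} \<and>
                     \<not> separable p q (normalized_laplacian (p*q) E)}"

definition zo_mats :: "nat \<Rightarrow> (nat \<times> nat \<Rightarrow> nat) set" where
  "zo_mats n = ({1..n} \<times> {1..n}) \<rightarrow>\<^sub>E {0, 1}"

definition line_sum_symmetric :: "nat \<Rightarrow> (nat \<times> nat \<Rightarrow> nat) \<Rightarrow> bool" where
  "line_sum_symmetric n A \<longleftrightarrow>
     (\<forall>i\<in>{1..n}. (\<Sum>j=1..n. A (i, j)) = (\<Sum>j=1..n. A (j, i)))"

definition N_s :: "nat \<Rightarrow> nat" where
  "N_s n = card {A \<in> zo_mats n. line_sum_symmetric n A}"

definition N_e :: "nat \<Rightarrow> nat" where
  "N_e n = 2 ^ (n^2) - N_s n"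

definition M :: "nat \<Rightarrow> nat \<Rightarrow> nat" where
  "M n i = card {A \<in> zo_mats n.
        (\<forall>j\<in>{1..n}. \<forall>k\<in>{1..n}. A (j, k) = A (k, j)) \<and>
        (\<forall>j\<in>{1..n}. A (j, j) = 0) \<and>
        card {x \<in> {1..n} \<times> {1..n}. A x \<noteq> 0} = 2 * i \<and>
        (\<exists>j\<in>{1..n}. card {k \<in> {1..n}. A (j, k) = 1} = 1)}"

end

theory Submission
  imports Defs
begin

text \<open>
  If \<open>L(G) / Tr L(G)\<close> is separable, every vertex has the same degree in \<open>G\<close> and in its partial
  transpose: the Laplacian has zero entry sum, so in a decomposition \<open>\<Sum> c\<^sub>j \<rho>\<^sub>j \<otimes> \<eta>\<^sub>j\<close> every term has a
  factor with zero entry sum, and a positive semidefinite matrix with zero entry sum has zero row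
  and column sums.

  Split the \<open>p q\<close> vertices into \<open>p\<close> blocks of size \<open>q\<close>. Take a graph \<open>A\<close> on the blocks with \<open>i\<close>
  edges and a vertex \<open>j\<^sub>0\<close> of degree one, arbitrary edges inside the blocks, and between blocks
  \<open>j < l\<close> the edges of a 0-1 matrix that is line sum symmetric exactly when \<open>jl\<close> is not an edge
  of \<open>A\<close>. At a vertex of block \<open>j\<^sub>0\<close> where the matrix towards the neighbour of \<open>j\<^sub>0\<close> has unequal
  row and column sums, the two degrees differ, so all these graphs are entangled. They are pairwise
  distinct and there are \<open>M\<^sub>p(i) N\<^sub>e(q)\<^sup>i N\<^sub>s(q)\<^bsup>p(p-1)/2-i\<^esup> 2\<^bsup>pq(q-1)/2\<^esup>\<close> of them.
\<close>

lemma sum_lessThan_mult_blocks: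
  fixes p q :: nat
  shows "(\<Sum>a<p*q. f a) = (\<Sum>k<p. \<Sum>x<q. f (k*q+x))"
proof (induction p)
  case (Suc p)
  have "(\<Sum>a<m+n. f a) = (\<Sum>a<m. f a) + (\<Sum>x<n. f (m+x))" for m n :: nat
    by (induction n) (simp_all add: add.assoc)
  from this[of "p*q" q] show ?case using Suc by (simp add: add.commute)
qed simp

lemma mult_add_less_mult:
  fixes k x p q :: nat
  assumes "k < p" "x < q"
  shows "k*q+x < p*q"
proof -
  have "k*q+x < Suc k * q" using assms by simp
  also have "\<dots> \<le> p*q" using assms by (intro mult_le_mono1) simp
  finally show ?thesis .
qed

lemma mult_add_eq_iff:
  fixes k l a b q :: nat
  assumes "a < q" "b < q"
  shows "k*q+a = l*q+b \<longleftrightarrow> k = l \<and> a = b"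
  by (metis assms add.commute div_mult_self1 div_less mod_mult_self1 mod_less add_0 less_nat_zero_code)

section \<open>Positive semidefinite matrices with zero entry sum\<close>

definition entry_sum :: "nat \<Rightarrow> (nat \<Rightarrow> nat \<Rightarrow> complex) \<Rightarrow> complex" where
  "entry_sum n A = (\<Sum>i<n. \<Sum>j<n. A i j)"

lemma psd_matD: "psd_mat n A \<Longrightarrow> 0 \<le> Re (\<Sum>i<n. \<Sum>j<n. cnj (v i) * A i j * v j)"
  unfolding psd_mat_def by blast

lemma psd_entry_sum_nonneg: "psd_mat n A \<Longrightarrow> 0 \<le> Re (entry_sum n A)"
  using psd_matD[of n A "\<lambda>_. 1"] by (simp add: entry_sum_def)

lemma psd_diag_nonneg:
  assumes "psd_mat n A" "i0 < n"
  shows "0 \<le> Re (A i0 i0)"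
proof -
  have cnj_if: "cnj (if P then 1 else 0) = (if P then 1 else (0::complex))" for P by simp
  have "(\<Sum>i<n. \<Sum>j<n. cnj (if i = i0 then 1 else 0) * A i j * (if j = i0 then 1 else 0)) = A i0 i0"
    using assms(2) by (simp add: cnj_if if_distrib[of "times _"] if_distrib[of "\<lambda>x. x * _"] cong: if_cong)
  then show ?thesis using psd_matD[OF assms(1), of "\<lambda>i. if i = i0 then 1 else 0"] by simp
qed

lemma hermitian_col_sum:
  assumes "hermitian_mat n A" "j < n"
  shows "(\<Sum>i<n. A i j) = cnj (\<Sum>i<n. A j i)"
  unfolding cnj_sum
proof (rule sum.cong)
  show "A i j = cnj (A j i)" if "i \<in> {..<n}" for i
    using assms that unfolding hermitian_mat_def by blast
qed simp

lemma hermitian_entry_sum_real: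
  assumes "hermitian_mat n A"
  shows "entry_sum n A = of_real (Re (entry_sum n A))"
proof -
  have "cnj (entry_sum n A) = (\<Sum>j<n. \<Sum>i<n. A i j)"
    unfolding entry_sum_def cnj_sum by (rule sum.cong[OF refl]) (simp add: hermitian_col_sum[OF assms])
  also have "\<dots> = entry_sum n A" unfolding entry_sum_def by (rule sum.swap)
  finally show ?thesis by (simp add: complex_eq_iff)
qed

lemma quadratic_form_ones_plus_unit:
  assumes "hermitian_mat n A" "i0 < n"
  defines "s \<equiv> \<Sum>j<n. A i0 j"
  shows "(\<Sum>i<n. \<Sum>j<n. cnj (1 + (if i = i0 then z else 0)) * A i j * (1 + (if j = i0 then z else 0)))
    = entry_sum n A + cnj z * s + z * cnj s + of_real ((cmod z)\<^sup>2) * A i0 i0"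
proof -
  have delta: "(\<Sum>i<n. f i * (if i = i0 then c else 0)) = f i0 * c" for f :: "nat \<Rightarrow> complex" and c
    using assms(2) by (simp add: if_distrib[of "times _"] cong: if_cong)
  have cnj_if: "cnj (if P then z else 0) = (if P then cnj z else 0)" for P by simp
  have "(\<Sum>i<n. \<Sum>j<n. cnj (1 + (if i = i0 then z else 0)) * A i j * (1 + (if j = i0 then z else 0)))
      = entry_sum n A + (\<Sum>i<n. (\<Sum>j<n. A i j) * (if i = i0 then cnj z else 0))
        + (\<Sum>i<n. \<Sum>j<n. A i j * (if j = i0 then z else 0))
        + (\<Sum>i<n. (\<Sum>j<n. A i j * (if j = i0 then z else 0)) * (if i = i0 then cnj z else 0))"
    unfolding entry_sum_def
    by (simp add: cnj_if sum.distrib sum_distrib_left sum_distrib_right algebra_simps)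
  also have "\<dots> = entry_sum n A + cnj z * s + z * (\<Sum>i<n. A i i0) + cnj z * z * A i0 i0"
    by (simp only: delta) (simp add: s_def sum_distrib_left mult_ac)
  also have "(\<Sum>i<n. A i i0) = cnj s" unfolding s_def by (rule hermitian_col_sum[OF assms(1,2)])
  also have "cnj z * z = of_real ((cmod z)\<^sup>2)"
    by (metis complex_norm_square mult.commute)
  finally show ?thesis .
qed

text \<open>Positivity at \<open>1 - t s e\<^sub>i\<^sub>0\<close>, where \<open>s\<close> is the row sum, gives \<open>-2t|s|\<^sup>2 + O(t\<^sup>2) \<ge> 0\<close>
  for all \<open>t > 0\<close>.\<close>
lemma psd_row_sum_zero:
  assumes psd: "psd_mat n A" and herm: "hermitian_mat n A"
    and total: "entry_sum n A = 0" and i0: "i0 < n"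
  shows "(\<Sum>j<n. A i0 j) = 0"
proof (rule ccontr)
  define s where "s = (\<Sum>j<n. A i0 j)"
  define a where "a = Re (A i0 i0)"
  define t where "t = 1 / (a + 1)"
  assume "(\<Sum>j<n. A i0 j) \<noteq> 0"
  then have s_pos: "0 < (cmod s)\<^sup>2" by (simp add: s_def)
  have "0 \<le> a" unfolding a_def by (rule psd_diag_nonneg[OF psd i0])
  then have t_pos: "0 < t" and ta: "t * a < 1" by (simp_all add: t_def field_simps)
  define z where "z = - (of_real t * s)"
  have "0 \<le> Re (entry_sum n A + cnj z * s + z * cnj s + of_real ((cmod z)\<^sup>2) * A i0 i0)"
    using psd_matD[OF psd, of "\<lambda>i. 1 + (if i = i0 then z else 0)"]
    by (simp only: quadratic_form_ones_plus_unit[OF herm i0] s_def)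
  also have "\<dots> = - 2 * t * (cmod s)\<^sup>2 + t\<^sup>2 * (cmod s)\<^sup>2 * a"
  proof -
    have "s * cnj s = of_real ((cmod s)\<^sup>2)" by (metis complex_norm_square of_real_power)
    then have "cnj z * s + z * cnj s = of_real (- 2 * t * (cmod s)\<^sup>2)"
      by (simp add: z_def algebra_simps)
    moreover have "(cmod z)\<^sup>2 = t\<^sup>2 * (cmod s)\<^sup>2"
      using t_pos by (simp add: z_def norm_mult power_mult_distrib)
    ultimately show ?thesis using total by (simp add: a_def)
  qed
  also have "\<dots> = t * (cmod s)\<^sup>2 * (t * a - 2)"
    by (simp add: algebra_simps power2_eq_square)
  finally have "0 \<le> t * (cmod s)\<^sup>2 * (t * a - 2)" .
  moreover have "0 < t * (cmod s)\<^sup>2" using t_pos s_pos by simp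
  ultimately have "0 \<le> t * a - 2" by (simp add: zero_le_mult_iff)
  with ta show False by simp
qed

lemma density_col_sum_zero:
  assumes "density_mat n A" "entry_sum n A = 0" "j < n"
  shows "(\<Sum>i<n. A i j) = 0"
  using assms psd_row_sum_zero[of n A j] hermitian_col_sum[of n A j]
  by (simp add: density_mat_def)

section \<open>Separable matrices\<close>

lemma separableE:
  assumes "separable p q \<rho>"
  obtains m :: nat and c \<rho>s \<eta>s where
    "\<And>j. j < m \<Longrightarrow> 0 \<le> c j \<and> density_mat p (\<rho>s j) \<and> density_mat q (\<eta>s j)"
    "\<And>k x l y. k < p \<Longrightarrow> x < q \<Longrightarrow> l < p \<Longrightarrow> y < q \<Longrightarrow>
       \<rho> (k*q+x) (l*q+y) = (\<Sum>j<m. of_real (c j) * \<rho>s j k l * \<eta>s j x y)"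
proof -
  obtain m :: nat and c \<rho>s \<eta>s where weights: "\<forall>j<m. 0 \<le> c j \<and> density_mat p (\<rho>s j) \<and> density_mat q (\<eta>s j)"
    and entries: "\<forall>a<p*q. \<forall>b<p*q. \<rho> a b =
       (\<Sum>j<m. of_real (c j) * \<rho>s j (a div q) (b div q) * \<eta>s j (a mod q) (b mod q))"
    using assms unfolding separable_def by (elim conjE exE) (rule that)
  show thesis
  proof (rule that)
    show "0 \<le> c j \<and> density_mat p (\<rho>s j) \<and> density_mat q (\<eta>s j)" if "j < m" for j
      using weights that by blast
    show "\<rho> (k*q+x) (l*q+y) = (\<Sum>j<m. of_real (c j) * \<rho>s j k l * \<eta>s j x y)"
      if "k < p" "x < q" "l < p" "y < q" for k x l y
    proof -
      have "(k*q+x) div q = k" "(k*q+x) mod q = x" "(l*q+y) div q = l" "(l*q+y) mod q = y"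
        using that by simp_all
      then show ?thesis
        using entries mult_add_less_mult[of k p x q] mult_add_less_mult[of l p y q] that by simp
    qed
  qed
qed

lemma scaled_sum_product:
  fixes c :: "'a::comm_semiring_1"
  shows "c * sum f A * sum g B = (\<Sum>i\<in>A. \<Sum>j\<in>B. c * f i * g j)"
proof -
  have "c * sum f A * sum g B = c * (\<Sum>i\<in>A. \<Sum>j\<in>B. f i * g j)"
    by (simp only: mult.assoc sum_product)
  also have "\<dots> = (\<Sum>i\<in>A. \<Sum>j\<in>B. c * f i * g j)"
    by (simp only: sum_distrib_left mult.assoc)
  finally show ?thesis .
qed

lemma sum_tensor_expansion:
  fixes \<rho> :: "nat \<Rightarrow> nat \<Rightarrow> complex"
  assumes entry: "\<And>k x l y. k < p \<Longrightarrow> x < q \<Longrightarrow> l < p \<Longrightarrow> y < q \<Longrightarrow>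
      \<rho> (k*q+x) (l*q+y) = (\<Sum>j<m. c j * P j k l * Q j x y)"
  shows "entry_sum (p*q) \<rho> = (\<Sum>j<m. c j * entry_sum p (P j) * entry_sum q (Q j))"
    and "k < p \<Longrightarrow> a < q \<Longrightarrow>
      (\<Sum>l<p. \<Sum>b<q. \<rho> (k*q+b) (l*q+a)) = (\<Sum>j<m. c j * (\<Sum>l<p. P j k l) * (\<Sum>b<q. Q j b a))"
proof -
  have "entry_sum (p*q) \<rho> = (\<Sum>k<p. \<Sum>x<q. \<Sum>l<p. \<Sum>y<q. \<Sum>j<m. c j * P j k l * Q j x y)"
    unfolding entry_sum_def sum_lessThan_mult_blocks by (intro sum.cong refl) (simp add: entry)
  also have "\<dots> = (\<Sum>j<m. \<Sum>k<p. \<Sum>x<q. \<Sum>l<p. \<Sum>y<q. c j * P j k l * Q j x y)"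
    by (simp only: sum.swap[of _ _ "{..<m}"])
  finally show "entry_sum (p*q) \<rho> = (\<Sum>j<m. c j * entry_sum p (P j) * entry_sum q (Q j))"
    by (simp only: entry_sum_def scaled_sum_product)
next
  assume "k < p" "a < q"
  then have "(\<Sum>l<p. \<Sum>b<q. \<rho> (k*q+b) (l*q+a)) = (\<Sum>l<p. \<Sum>b<q. \<Sum>j<m. c j * P j k l * Q j b a)"
    by (intro sum.cong refl) (simp add: entry)
  also have "\<dots> = (\<Sum>j<m. \<Sum>l<p. \<Sum>b<q. c j * P j k l * Q j b a)"
    by (simp only: sum.swap[of _ _ "{..<m}"])
  finally show "(\<Sum>l<p. \<Sum>b<q. \<rho> (k*q+b) (l*q+a)) = (\<Sum>j<m. c j * (\<Sum>l<p. P j k l) * (\<Sum>b<q. Q j b a))"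
    by (simp only: scaled_sum_product)
qed

text \<open>Each product term contributes \<open>c\<^sub>j \<Sigma>\<rho>\<^sub>j \<Sigma>\<eta>\<^sub>j \<ge> 0\<close> to the zero entry sum, so one of
  its factors vanishes, and a density matrix with zero entry sum has zero row and column sums.\<close>
lemma separable_partial_transpose_row_sum_zero:
  assumes sep: "separable p q \<rho>" and total: "entry_sum (p*q) \<rho> = 0" and k: "k < p" and a: "a < q"
  shows "(\<Sum>l<p. \<Sum>b<q. \<rho> (k*q+b) (l*q+a)) = 0"
proof -
  obtain m :: nat and c \<rho>s \<eta>s where
    dens: "\<And>j. j < m \<Longrightarrow> 0 \<le> c j \<and> density_mat p (\<rho>s j) \<and> density_mat q (\<eta>s j)" and
    entry: "\<And>k x l y. k < p \<Longrightarrow> x < q \<Longrightarrow> l < p \<Longrightarrow> y < q \<Longrightarrow>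
       \<rho> (k*q+x) (l*q+y) = (\<Sum>j<m. of_real (c j) * \<rho>s j k l * \<eta>s j x y)"
    using separableE[OF sep] by blast
  define R where "R j = Re (entry_sum p (\<rho>s j))" for j
  define H where "H j = Re (entry_sum q (\<eta>s j))" for j
  have R: "entry_sum p (\<rho>s j) = of_real (R j)" "0 \<le> R j" if "j < m" for j
    using dens[OF that] hermitian_entry_sum_real psd_entry_sum_nonneg
    unfolding R_def density_mat_def by blast+
  have H: "entry_sum q (\<eta>s j) = of_real (H j)" "0 \<le> H j" if "j < m" for j
    using dens[OF that] hermitian_entry_sum_real psd_entry_sum_nonneg
    unfolding H_def density_mat_def by blast+
  have "complex_of_real (\<Sum>j<m. c j * R j * H j)
      = (\<Sum>j<m. of_real (c j) * entry_sum p (\<rho>s j) * entry_sum q (\<eta>s j))"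
    by (simp add: R(1) H(1))
  also have "\<dots> = entry_sum (p*q) \<rho>"
    by (rule sum_tensor_expansion(1)[symmetric]) (simp add: entry)
  finally have "complex_of_real (\<Sum>j<m. c j * R j * H j) = entry_sum (p*q) \<rho>" .
  then have "(\<Sum>j<m. c j * R j * H j) = 0" unfolding total by (simp only: of_real_eq_0_iff)
  then have weight_zero: "c j * R j * H j = 0" if "j < m" for j
    using that dens R(2) H(2) by (subst (asm) sum_nonneg_eq_0_iff) auto
  have term_zero: "of_real (c j) * (\<Sum>l<p. \<rho>s j k l) * (\<Sum>b<q. \<eta>s j b a) = 0" if j: "j < m" for j
  proof -
    from weight_zero[OF j] consider "c j = 0" | "R j = 0" | "H j = 0" by auto
    then show ?thesis
    proof cases
      case 2
      then have "(\<Sum>l<p. \<rho>s j k l) = 0"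
        using psd_row_sum_zero[of p "\<rho>s j" k] dens[OF j] R(1)[OF j] k
        by (simp add: density_mat_def)
      then show ?thesis by simp
    next
      case 3
      then have "(\<Sum>b<q. \<eta>s j b a) = 0"
        using density_col_sum_zero[of q "\<eta>s j" a] dens[OF j] H(1)[OF j] a by simp
      then show ?thesis by simp
    qed simp
  qed
  have "(\<Sum>l<p. \<Sum>b<q. \<rho> (k*q+b) (l*q+a))
      = (\<Sum>j<m. of_real (c j) * (\<Sum>l<p. \<rho>s j k l) * (\<Sum>b<q. \<eta>s j b a))"
    by (rule sum_tensor_expansion(2)[OF _ k a]) (simp add: entry)
  also have "\<dots> = 0" using term_zero by (intro sum.neutral) simp
  finally show ?thesis .
qed

section \<open>Graph Laplacians\<close>

lemma graphs_edgeD: "E \<in> graphs n \<Longrightarrow> e \<in> E \<Longrightarrow> e \<subseteq> {1..n} \<and> card e = 2"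
  unfolding graphs_def by auto

lemma finite_graphs: "finite (graphs n)"
  unfolding graphs_def by (rule finite_Pow_iff[THEN iffD2], rule finite_subset[of _ "Pow {1..n}"]) auto

lemma graphs_finite_edges: "E \<in> graphs n \<Longrightarrow> finite E"
  using finite_graphs unfolding graphs_def by (auto intro: finite_subset)

lemma degree_eq_card_neighbours:
  assumes E: "E \<in> graphs n" and x: "x < n"
  shows "degree E (x+1) = card {b\<in>{..<n}. {x+1, b+1} \<in> E}"
proof -
  have "inj_on (\<lambda>b. {x+1, b+1}) {b\<in>{..<n}. {x+1, b+1} \<in> E}"
  proof (rule inj_onI)
    fix b b' assume b: "b \<in> {b\<in>{..<n}. {x+1, b+1} \<in> E}" and "{x+1, b+1} = {x+1, b'+1}"
    moreover have "card {x+1, b+1} = 2" using b graphs_edgeD[OF E] by blast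
    then have "b \<noteq> x" by auto
    ultimately show "b = b'" by (auto simp: doubleton_eq_iff)
  qed
  moreover have "(\<lambda>b. {x+1, b+1}) ` {b\<in>{..<n}. {x+1, b+1} \<in> E} = {e \<in> E. x+1 \<in> e}"
  proof (intro equalityI subsetI)
    fix e assume "e \<in> {e \<in> E. x+1 \<in> e}"
    then have e: "e \<in> E" "x+1 \<in> e" by auto
    from graphs_edgeD[OF E e(1)] obtain u v where "e = {u, v}" "e \<subseteq> {1..n}"
      by (auto simp: card_2_iff)
    with e(2) obtain v where "e = {x+1, v}" "v \<in> {1..n}" by auto
    then show "e \<in> (\<lambda>b. {x+1, b+1}) ` {b\<in>{..<n}. {x+1, b+1} \<in> E}"
      using e by (intro image_eqI[of _ _ "v - 1"]) auto
  qed blast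
  ultimately show ?thesis unfolding degree_def by (metis (no_types, lifting) card_image)
qed

lemma degree_eq_sum_adjacent:
  assumes "E \<in> graphs n" "x < n"
  shows "(of_nat (degree E (x+1)) :: 'a::semiring_1) = (\<Sum>b<n. of_bool ({x+1, b+1} \<in> E))"
  using degree_eq_card_neighbours[OF assms] by (simp add: Int_def conj_commute)

lemma laplacian_row_sum_zero:
  assumes "E \<in> graphs n" "x < n"
  shows "(\<Sum>b<n. laplacian E x b) = 0"
  using assms degree_eq_sum_adjacent[OF assms]
  by (simp add: laplacian_def sum_subtractf of_bool_def)

lemma trace_laplacian_nonzero:
  assumes E: "E \<in> graphs n" and "E \<noteq> {}"
  shows "trace_mat n (laplacian E) \<noteq> 0"
proof -
  have loopless: "{v} \<notin> E" for v using graphs_edgeD[OF E, of "{v}"] by auto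
  have trace: "trace_mat n (laplacian E) = of_nat (\<Sum>x<n. degree E (x+1))"
    by (simp add: trace_mat_def laplacian_def loopless)
  obtain e where e: "e \<in> E" using \<open>E \<noteq> {}\<close> by auto
  with graphs_edgeD[OF E] have "e \<subseteq> {1..n}" "card e = 2" by auto
  then have "e \<noteq> {}" by auto
  with \<open>e \<subseteq> {1..n}\<close> obtain u where u: "u \<in> e" "u \<in> {1..n}" by blast
  have "0 < degree E u"
    unfolding degree_def using graphs_finite_edges[OF E] e u(1) by (auto simp: card_gt_0_iff)
  also have "degree E u \<le> (\<Sum>x<n. degree E (x+1))"
    using u(2) member_le_sum[of "u - 1" "{..<n}" "\<lambda>x. degree E (x+1)"] by auto
  finally show ?thesis unfolding trace by (simp only: of_nat_eq_0_iff)
qed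

lemma laplacian_partial_transpose_row_sum:
  assumes "k < p" "a < q"
  shows "(\<Sum>l<p. \<Sum>b<q. laplacian E (k*q+b) (l*q+a))
    = of_nat (degree E (k*q+a+1)) - (\<Sum>l<p. \<Sum>b<q. of_bool ({k*q+b+1, l*q+a+1} \<in> E))"
proof -
  have "(\<Sum>l<p. \<Sum>b<q. laplacian E (k*q+b) (l*q+a))
      = (\<Sum>l<p. \<Sum>b<q. (if l = k then if b = a then of_nat (degree E (k*q+a+1)) else 0 else 0)
        - of_bool ({k*q+b+1, l*q+a+1} \<in> E))"
    using assms(2) by (intro sum.cong refl) (auto simp: laplacian_def mult_add_eq_iff)
  also have "\<dots> = (\<Sum>l<p. \<Sum>b<q. if l = k then if b = a then of_nat (degree E (k*q+a+1)) else 0 else 0)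
      - (\<Sum>l<p. \<Sum>b<q. of_bool ({k*q+b+1, l*q+a+1} \<in> E))"
    by (simp only: sum_subtractf)
  also have "(\<Sum>l<p. \<Sum>b<q. if l = k then if b = a then of_nat (degree E (k*q+a+1)) else 0 else 0)
      = (of_nat (degree E (k*q+a+1)) :: complex)"
    using assms by (subst sum.swap) simp
  finally show ?thesis .
qed

lemma entry_sum_normalized_laplacian:
  assumes "E \<in> graphs n"
  shows "entry_sum n (normalized_laplacian n E) = 0"
  using laplacian_row_sum_zero[OF assms]
  by (simp add: entry_sum_def normalized_laplacian_def flip: sum_divide_distrib)

section \<open>The degree criterion\<close>

text \<open>Vertex \<open>(j - 1) q + a\<close> (\<open>1 \<le> j \<le> p\<close>, \<open>1 \<le> a \<le> q\<close>) corresponds to the basis vector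
  \<open>e\<^sub>j \<otimes> e\<^sub>a\<close> under the Kronecker identification in the definition of separability.\<close>
definition block_vertex :: "nat \<Rightarrow> nat \<Rightarrow> nat \<Rightarrow> nat" where
  "block_vertex q j a = (j - 1) * q + a"

lemma block_vertex_Suc_Suc: "block_vertex q (Suc l) (Suc b) = l * q + b + 1"
  by (simp add: block_vertex_def)

lemma block_vertex_eq_iff:
  assumes "j \<ge> 1" "l \<ge> 1" "a \<in> {1..q}" "b \<in> {1..q}"
  shows "block_vertex q j a = block_vertex q l b \<longleftrightarrow> j = l \<and> a = b"
proof -
  obtain j' l' a' b' where "j = Suc j'" "l = Suc l'" "a = Suc a'" "b = Suc b'" "a' < q" "b' < q"
    using assms by (intro that[of "j - 1" "l - 1" "a - 1" "b - 1"]) auto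
  then show ?thesis by (simp add: block_vertex_Suc_Suc mult_add_eq_iff)
qed

lemma block_vertex_in_range:
  assumes "j \<in> {1..p}" "a \<in> {1..q}"
  shows "block_vertex q j a \<in> {1..p*q}"
proof -
  have "(j-1)*q + (a-1) < p*q" using assms by (intro mult_add_less_mult) auto
  then show ?thesis using assms by (auto simp: block_vertex_def)
qed

lemma sum_atLeast1_atMost_nested:
  "(\<Sum>l=1..p. \<Sum>b=1..q. f l b) = (\<Sum>l<p. \<Sum>b<q. f (Suc l) (Suc b))"
  by (simp add: sum.atLeast1_atMost_eq)

text \<open>The right-hand side is the degree of vertex \<open>(j, a)\<close> in the partially transposed graph.\<close>
lemma separable_laplacian_degree_balance:
  assumes E: "E \<in> graphs (p*q)" and "E \<noteq> {}"
    and sep: "separable p q (normalized_laplacian (p*q) E)"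
    and j: "j \<in> {1..p}" and a: "a \<in> {1..q}"
  shows "(\<Sum>l=1..p. \<Sum>b=1..q. of_bool ({block_vertex q j a, block_vertex q l b} \<in> E) :: nat)
       = (\<Sum>l=1..p. \<Sum>b=1..q. of_bool ({block_vertex q j b, block_vertex q l a} \<in> E))"
proof -
  obtain k a' where ka: "j = Suc k" "a = Suc a'" "k < p" "a' < q"
    using j a by (intro that[of "j - 1" "a - 1"]) auto
  define T where "T = trace_mat (p*q) (laplacian E)"
  have "T \<noteq> 0" unfolding T_def using trace_laplacian_nonzero[OF E \<open>E \<noteq> {}\<close>] .
  have "(\<Sum>l<p. \<Sum>b<q. laplacian E (k*q+b) (l*q+a')) / T = 0"
    using separable_partial_transpose_row_sum_zero[OF sep entry_sum_normalized_laplacian[OF E] ka(3,4)]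
    by (simp add: normalized_laplacian_def T_def sum_divide_distrib)
  then have "(\<Sum>l<p. \<Sum>b<q. laplacian E (k*q+b) (l*q+a')) = 0" using \<open>T \<noteq> 0\<close> by simp
  then have transposed: "of_nat (degree E (k*q+a'+1))
      = (\<Sum>l<p. \<Sum>b<q. of_bool ({k*q+b+1, l*q+a'+1} \<in> E) :: complex)"
    by (simp add: laplacian_partial_transpose_row_sum[OF ka(3,4)])
  have direct: "(of_nat (degree E (k*q+a'+1)) :: complex) = (\<Sum>l<p. \<Sum>b<q. of_bool ({k*q+a'+1, l*q+b+1} \<in> E))"
    using degree_eq_sum_adjacent[OF E mult_add_less_mult[OF ka(3,4)]] by (simp add: sum_lessThan_mult_blocks)
  have cast: "(\<Sum>l<p. \<Sum>b<q. of_bool (P l b) :: complex) = of_nat (\<Sum>l<p. \<Sum>b<q. of_bool (P l b))"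
    for P by simp
  have "(\<Sum>l<p. \<Sum>b<q. of_bool ({k*q+a'+1, l*q+b+1} \<in> E) :: nat)
      = (\<Sum>l<p. \<Sum>b<q. of_bool ({k*q+b+1, l*q+a'+1} \<in> E))"
    using transposed direct unfolding cast of_nat_eq_iff by simp
  then show ?thesis unfolding ka(1,2) sum_atLeast1_atMost_nested block_vertex_Suc_Suc .
qed

section \<open>Block graphs\<close>

definition vertex_block :: "nat \<Rightarrow> nat \<Rightarrow> nat set" where
  "vertex_block q j = block_vertex q j ` {1..q}"

definition intra_block_edges :: "nat \<Rightarrow> nat \<Rightarrow> nat set set" where
  "intra_block_edges p q = (\<Union>j\<in>{1..p}. {e. e \<subseteq> vertex_block q j \<and> card e = 2})"

definition block_pairs :: "nat \<Rightarrow> (nat \<times> nat) set" where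
  "block_pairs p = {(j, l). j \<in> {1..p} \<and> l \<in> {1..p} \<and> j < l}"

definition inter_block_edges :: "nat \<Rightarrow> nat \<Rightarrow> (nat \<times> nat \<Rightarrow> nat \<times> nat \<Rightarrow> nat) \<Rightarrow> nat set set" where
  "inter_block_edges p q B = {{block_vertex q j a, block_vertex q l b} | j l a b.
     (j, l) \<in> block_pairs p \<and> a \<in> {1..q} \<and> b \<in> {1..q} \<and> B (j, l) (a, b) = 1}"

definition cross_block :: "(nat \<times> nat \<Rightarrow> nat \<times> nat \<Rightarrow> nat) \<Rightarrow> nat \<Rightarrow> nat \<Rightarrow> nat \<times> nat \<Rightarrow> nat" where
  "cross_block B j l = (if j < l then B (j, l) else (\<lambda>(a, b). B (l, j) (b, a)))"

lemma finite_block_pairs: "finite (block_pairs p)"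
  by (rule finite_subset[of _ "{1..p} \<times> {1..p}"]) (auto simp: block_pairs_def)

lemma finite_intra_block_edges: "finite (intra_block_edges p q)"
  unfolding intra_block_edges_def vertex_block_def by (auto intro: finite_subset[of _ "Pow _"])

lemma cross_edge_not_intra_block:
  assumes "j \<in> {1..p}" "l \<in> {1..p}" "j \<noteq> l" "a \<in> {1..q}" "b \<in> {1..q}"
  shows "{block_vertex q j a, block_vertex q l b} \<notin> intra_block_edges p q"
proof
  assume "{block_vertex q j a, block_vertex q l b} \<in> intra_block_edges p q"
  then obtain i where i: "i \<in> {1..p}" "{block_vertex q j a, block_vertex q l b} \<subseteq> vertex_block q i"
    unfolding intra_block_edges_def by auto
  then obtain a' b' where "a' \<in> {1..q}" "b' \<in> {1..q}"
    "block_vertex q j a = block_vertex q i a'" "block_vertex q l b = block_vertex q i b'"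
    unfolding vertex_block_def by auto
  then have "j = i" "l = i"
    using assms i(1) block_vertex_eq_iff[of j i a q a'] block_vertex_eq_iff[of l i b q b'] by auto
  with assms show False by simp
qed

lemma inter_block_edges_disjoint: "inter_block_edges p q B \<inter> intra_block_edges p q = {}"
proof -
  have "e \<notin> intra_block_edges p q" if "e \<in> inter_block_edges p q B" for e
  proof -
    from that obtain j l a b where "e = {block_vertex q j a, block_vertex q l b}"
      "j \<in> {1..p}" "l \<in> {1..p}" "j < l" "a \<in> {1..q}" "b \<in> {1..q}"
      unfolding inter_block_edges_def block_pairs_def by blast
    then show ?thesis using cross_edge_not_intra_block[of j p l a q b] by simp
  qed
  then show ?thesis by blast
qed

lemma inter_block_edge_iff:
  assumes "j \<in> {1..p}" "l \<in> {1..p}" "j \<noteq> l" "a \<in> {1..q}" "b \<in> {1..q}"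
  shows "{block_vertex q j a, block_vertex q l b} \<in> inter_block_edges p q B
    \<longleftrightarrow> cross_block B j l (a, b) = 1"
proof
  assume "{block_vertex q j a, block_vertex q l b} \<in> inter_block_edges p q B"
  then obtain j' l' a' b' where e: "{block_vertex q j a, block_vertex q l b} = {block_vertex q j' a', block_vertex q l' b'}"
    and j'l': "j' \<in> {1..p}" "l' \<in> {1..p}" "j' < l'" and a'b': "a' \<in> {1..q}" "b' \<in> {1..q}"
    and B: "B (j', l') (a', b') = 1"
    unfolding inter_block_edges_def block_pairs_def by blast
  from e consider "block_vertex q j a = block_vertex q j' a'" "block_vertex q l b = block_vertex q l' b'"
    | "block_vertex q j a = block_vertex q l' b'" "block_vertex q l b = block_vertex q j' a'"
    by (auto simp: doubleton_eq_iff)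
  then show "cross_block B j l (a, b) = 1"
  proof cases
    case 1
    then have "j = j'" "a = a'" "l = l'" "b = b'"
      using assms j'l' a'b' by (simp_all add: block_vertex_eq_iff)
    then show ?thesis using B j'l' by (simp add: cross_block_def)
  next
    case 2
    then have "j = l'" "a = b'" "l = j'" "b = a'"
      using assms j'l' a'b' by (simp_all add: block_vertex_eq_iff)
    then show ?thesis using B j'l' by (simp add: cross_block_def)
  qed
next
  assume B: "cross_block B j l (a, b) = 1"
  show "{block_vertex q j a, block_vertex q l b} \<in> inter_block_edges p q B"
  proof (cases "j < l")
    case True
    with assms B have "(j, l) \<in> block_pairs p" "B (j, l) (a, b) = 1"
      by (simp_all add: block_pairs_def cross_block_def)
    with assms show ?thesis unfolding inter_block_edges_def by blast
  next
    case False
    with assms B have "(l, j) \<in> block_pairs p" "B (l, j) (b, a) = 1"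
      by (simp_all add: block_pairs_def cross_block_def)
    with assms have "{block_vertex q l b, block_vertex q j a} \<in> inter_block_edges p q B"
      unfolding inter_block_edges_def by blast
    then show ?thesis by (simp add: insert_commute)
  qed
qed

definition lss_mats :: "nat \<Rightarrow> (nat \<times> nat \<Rightarrow> nat) set" where
  "lss_mats q = {B \<in> zo_mats q. line_sum_symmetric q B}"

definition non_lss_mats :: "nat \<Rightarrow> (nat \<times> nat \<Rightarrow> nat) set" where
  "non_lss_mats q = {B \<in> zo_mats q. \<not> line_sum_symmetric q B}"

definition pendant_mats :: "nat \<Rightarrow> nat \<Rightarrow> (nat \<times> nat \<Rightarrow> nat) set" where
  "pendant_mats n i = {A \<in> zo_mats n.
        (\<forall>j\<in>{1..n}. \<forall>k\<in>{1..n}. A (j, k) = A (k, j)) \<and>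
        (\<forall>j\<in>{1..n}. A (j, j) = 0) \<and>
        card {x \<in> {1..n} \<times> {1..n}. A x \<noteq> 0} = 2 * i \<and>
        (\<exists>j\<in>{1..n}. card {k \<in> {1..n}. A (j, k) = 1} = 1)}"

definition block_matrix_choices :: "nat \<Rightarrow> (nat \<times> nat \<Rightarrow> nat) \<Rightarrow> nat \<times> nat \<Rightarrow> (nat \<times> nat \<Rightarrow> nat) set" where
  "block_matrix_choices q A x = (if A x = 1 then non_lss_mats q else lss_mats q)"

lemma zo_mats_entry: "B \<in> zo_mats q \<Longrightarrow> a \<in> {1..q} \<Longrightarrow> b \<in> {1..q} \<Longrightarrow> B (a, b) \<in> {0, 1}"
  unfolding zo_mats_def by auto

lemma zo_mats_eqI:
  assumes "B \<in> zo_mats q" "B' \<in> zo_mats q"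
    and "\<And>a b. a \<in> {1..q} \<Longrightarrow> b \<in> {1..q} \<Longrightarrow> B (a, b) = 1 \<longleftrightarrow> B' (a, b) = 1"
  shows "B = B'"
proof (rule PiE_ext[OF assms(1,2)[unfolded zo_mats_def]])
  fix x assume "x \<in> {1..q} \<times> {1..q}"
  then obtain a b where "x = (a, b)" "a \<in> {1..q}" "b \<in> {1..q}" by blast
  then show "B x = B' x" using zo_mats_entry[OF assms(1)] zo_mats_entry[OF assms(2)] assms(3) by fastforce
qed

lemma line_sum_symmetric_transpose:
  "line_sum_symmetric q (\<lambda>(a, b). B (b, a)) \<longleftrightarrow> line_sum_symmetric q B"
  unfolding line_sum_symmetric_def by auto

lemma block_matrix_in_zo_mats:
  "B \<in> PiE (block_pairs p) (block_matrix_choices q A) \<Longrightarrow> x \<in> block_pairs p \<Longrightarrow> B x \<in> zo_mats q"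
  by (auto simp: block_matrix_choices_def lss_mats_def non_lss_mats_def split: if_splits)

lemma cross_block_entry:
  assumes "B \<in> PiE (block_pairs p) (block_matrix_choices q A)"
    and "j \<in> {1..p}" "l \<in> {1..p}" "j \<noteq> l" "a \<in> {1..q}" "b \<in> {1..q}"
  shows "cross_block B j l (a, b) \<in> {0, 1}"
proof (cases "j < l")
  case True
  then have "B (j, l) \<in> zo_mats q" using assms by (intro block_matrix_in_zo_mats) (auto simp: block_pairs_def)
  then show ?thesis using zo_mats_entry[of "B (j, l)" q a b] True assms by (simp add: cross_block_def)
next
  case False
  then have "B (l, j) \<in> zo_mats q" using assms by (intro block_matrix_in_zo_mats) (auto simp: block_pairs_def)
  then show ?thesis using zo_mats_entry[of "B (l, j)" q b a] False assms by (simp add: cross_block_def)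
qed

lemma cross_block_line_sum_symmetric_iff:
  assumes B: "B \<in> PiE (block_pairs p) (block_matrix_choices q A)"
    and A: "\<And>j k. j \<in> {1..p} \<Longrightarrow> k \<in> {1..p} \<Longrightarrow> A (j, k) = A (k, j)"
    and "j \<in> {1..p}" "l \<in> {1..p}" "j \<noteq> l"
  shows "line_sum_symmetric q (cross_block B j l) \<longleftrightarrow> A (j, l) \<noteq> 1"
proof -
  have choice: "line_sum_symmetric q (B x) \<longleftrightarrow> A x \<noteq> 1" if "x \<in> block_pairs p" for x
    using B that by (auto simp: block_matrix_choices_def lss_mats_def non_lss_mats_def split: if_splits)
  show ?thesis
  proof (cases "j < l")
    case True
    then show ?thesis using assms choice[of "(j, l)"] by (simp add: cross_block_def block_pairs_def)
  next
    case False
    then show ?thesis using assms choice[of "(l, j)"]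
      by (simp add: cross_block_def block_pairs_def line_sum_symmetric_transpose)
  qed
qed

lemma Un_inter_block_edges_in_graphs:
  assumes "F \<subseteq> intra_block_edges p q"
  shows "F \<union> inter_block_edges p q B \<in> graphs (p*q)"
proof -
  have "e \<subseteq> {1..p*q} \<and> card e = 2" if "e \<in> F" for e
  proof -
    from that assms obtain j where "j \<in> {1..p}" "e \<subseteq> vertex_block q j" "card e = 2"
      unfolding intra_block_edges_def by auto
    then show ?thesis using block_vertex_in_range unfolding vertex_block_def by blast
  qed
  moreover have "e \<subseteq> {1..p*q} \<and> card e = 2" if "e \<in> inter_block_edges p q B" for e
  proof -
    from that obtain j l a b where "e = {block_vertex q j a, block_vertex q l b}"
      "j \<in> {1..p}" "l \<in> {1..p}" "j < l" "a \<in> {1..q}" "b \<in> {1..q}"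
      unfolding inter_block_edges_def block_pairs_def by blast
    moreover from this have "block_vertex q j a \<in> {1..p*q}" "block_vertex q l b \<in> {1..p*q}"
      "block_vertex q j a \<noteq> block_vertex q l b"
      using block_vertex_in_range[of j p a q] block_vertex_in_range[of l p b q]
        block_vertex_eq_iff[of j l a q b] by auto
    ultimately show ?thesis by auto
  qed
  ultimately show ?thesis unfolding graphs_def by blast
qed

lemma Un_inter_block_edge_iff:
  assumes "F \<subseteq> intra_block_edges p q"
    and "j \<in> {1..p}" "l \<in> {1..p}" "j \<noteq> l" "a \<in> {1..q}" "b \<in> {1..q}"
  shows "{block_vertex q j a, block_vertex q l b} \<in> F \<union> inter_block_edges p q B
    \<longleftrightarrow> cross_block B j l (a, b) = 1"
  using assms cross_edge_not_intra_block[of j p l a q b] inter_block_edge_iff[of j p l a q b B]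
  by blast

lemma cross_block_edge_indicator:
  assumes F: "F \<subseteq> intra_block_edges p q" and B: "B \<in> PiE (block_pairs p) (block_matrix_choices q A)"
    and jl: "j \<in> {1..p}" "l \<in> {1..p}" "j \<noteq> l" and ab: "a \<in> {1..q}" "b \<in> {1..q}"
  shows "of_bool ({block_vertex q j a, block_vertex q l b} \<in> F \<union> inter_block_edges p q B)
    = cross_block B j l (a, b)"
  using Un_inter_block_edge_iff[OF F jl ab, of B] cross_block_entry[OF B jl ab] by auto

lemma sum_neq_by_single_term:
  assumes "finite S" "x \<in> S" "f x \<noteq> g x" "\<And>y. y \<in> S - {x} \<Longrightarrow> f y = g y"
  shows "sum f S \<noteq> (sum g S :: 'a::cancel_comm_monoid_add)"
proof -
  have "sum f (S - {x}) = sum g (S - {x})" using assms(4) by (rule sum.cong[OF refl])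
  with assms(1-3) show ?thesis by (simp add: sum.remove)
qed

lemma pendant_matsE:
  assumes "A \<in> pendant_mats p i"
  obtains j0 l0 where "j0 \<in> {1..p}" "l0 \<in> {1..p}" "l0 \<noteq> j0" "A (j0, l0) = 1"
    "\<And>k. k \<in> {1..p} \<Longrightarrow> A (j0, k) = 1 \<Longrightarrow> k = l0"
proof -
  obtain j0 where j0: "j0 \<in> {1..p}" and card1: "card {k \<in> {1..p}. A (j0, k) = 1} = 1"
    using assms unfolding pendant_mats_def by blast
  from card1 obtain l0 where l0: "{k \<in> {1..p}. A (j0, k) = 1} = {l0}" by (rule card_1_singletonE)
  then have l0_mem: "l0 \<in> {1..p}" "A (j0, l0) = 1" by blast+
  have unique: "k = l0" if "k \<in> {1..p}" "A (j0, k) = 1" for k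
    using l0 that by blast
  have "A (j0, j0) = 0" using assms j0 unfolding pendant_mats_def by blast
  with l0_mem have "l0 \<noteq> j0" by auto
  from that[OF j0 l0_mem(1) this l0_mem(2) unique] show ?thesis .
qed

text \<open>The vertex \<open>(j\<^sub>0, a\<^sub>0)\<close> violates the degree balance: \<open>j\<^sub>0\<close> is a pendant vertex of \<open>A\<close>,
  so only the block between \<open>j\<^sub>0\<close> and its unique neighbour \<open>l\<^sub>0\<close> fails to be line sum
  symmetric, and \<open>a\<^sub>0\<close> is chosen where its row and column sums differ.\<close>
lemma block_graph_entangled:
  assumes A: "A \<in> pendant_mats p i" and B: "B \<in> PiE (block_pairs p) (block_matrix_choices q A)"
    and F: "F \<subseteq> intra_block_edges p q"
  defines "E \<equiv> F \<union> inter_block_edges p q B"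
  shows "E \<noteq> {}" and "\<not> separable p q (normalized_laplacian (p*q) E)"
proof -
  have A_sym: "\<And>j k. j \<in> {1..p} \<Longrightarrow> k \<in> {1..p} \<Longrightarrow> A (j, k) = A (k, j)"
    using A unfolding pendant_mats_def by blast
  obtain j0 l0 where j0: "j0 \<in> {1..p}" and l0: "l0 \<in> {1..p}" "l0 \<noteq> j0" "A (j0, l0) = 1"
    and pendant: "\<And>k. k \<in> {1..p} \<Longrightarrow> A (j0, k) = 1 \<Longrightarrow> k = l0"
    using pendant_matsE[OF A] by blast
  have "\<not> line_sum_symmetric q (cross_block B j0 l0)"
    using cross_block_line_sum_symmetric_iff[OF B A_sym j0 l0(1)] l0 by simp
  then obtain a0 where a0: "a0 \<in> {1..q}"
    and unbalanced: "(\<Sum>b=1..q. cross_block B j0 l0 (a0, b)) \<noteq> (\<Sum>b=1..q. cross_block B j0 l0 (b, a0))"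
    unfolding line_sum_symmetric_def by blast
  define deg where "deg l = (\<Sum>b=1..q. of_bool ({block_vertex q j0 a0, block_vertex q l b} \<in> E) :: nat)" for l
  define deg_transposed where
    "deg_transposed l = (\<Sum>b=1..q. of_bool ({block_vertex q j0 b, block_vertex q l a0} \<in> E) :: nat)" for l
  have cross: "deg l = (\<Sum>b=1..q. cross_block B j0 l (a0, b))"
    "deg_transposed l = (\<Sum>b=1..q. cross_block B j0 l (b, a0))"
    if "l \<in> {1..p}" "l \<noteq> j0" for l
  proof -
    have "j0 \<noteq> l" using that(2) by simp
    note indicator = cross_block_edge_indicator[OF F B j0 that(1) this]
    show "deg l = (\<Sum>b=1..q. cross_block B j0 l (a0, b))"
      unfolding deg_def E_def by (rule sum.cong[OF refl], rule indicator[OF a0])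
    show "deg_transposed l = (\<Sum>b=1..q. cross_block B j0 l (b, a0))"
      unfolding deg_transposed_def E_def by (rule sum.cong[OF refl], rule indicator[OF _ a0])
  qed
  have "deg l0 \<noteq> deg_transposed l0" using unbalanced cross[OF l0(1,2)] by simp
  then show "E \<noteq> {}" by (auto simp: deg_def deg_transposed_def)
  have "deg l = deg_transposed l" if "l \<in> {1..p} - {l0}" for l
  proof (cases "l = j0")
    case True
    then show ?thesis by (simp add: deg_def deg_transposed_def insert_commute)
  next
    case False
    with that have "line_sum_symmetric q (cross_block B j0 l)"
      using cross_block_line_sum_symmetric_iff[OF B A_sym j0, of l] pendant[of l] by auto
    with that False a0 show ?thesis unfolding line_sum_symmetric_def by (simp add: cross)
  qed
  with l0(1) \<open>deg l0 \<noteq> deg_transposed l0\<close>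
  have "(\<Sum>l=1..p. deg l) \<noteq> (\<Sum>l=1..p. deg_transposed l)"
    by (intro sum_neq_by_single_term) auto
  moreover have "(\<Sum>l=1..p. deg l) = (\<Sum>l=1..p. deg_transposed l)"
    if "separable p q (normalized_laplacian (p*q) E)"
    using separable_laplacian_degree_balance[OF Un_inter_block_edges_in_graphs[OF F, of B, folded E_def]
        \<open>E \<noteq> {}\<close> that j0 a0]
    unfolding deg_def deg_transposed_def .
  ultimately show "\<not> separable p q (normalized_laplacian (p*q) E)" by blast
qed

section \<open>Counting\<close>

lemma finite_zo_mats: "finite (zo_mats n)"
  unfolding zo_mats_def by (intro finite_PiE) auto

lemma card_zo_mats: "card (zo_mats n) = 2 ^ (n\<^sup>2)"
  unfolding zo_mats_def by (simp add: card_funcsetE card_cartesian_product power2_eq_square numeral_2_eq_2)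

lemma card_lss_mats: "card (lss_mats q) = N_s q"
  unfolding lss_mats_def N_s_def ..

lemma card_non_lss_mats: "card (non_lss_mats q) = N_e q"
proof -
  have "non_lss_mats q = zo_mats q - lss_mats q" unfolding non_lss_mats_def lss_mats_def by auto
  then show ?thesis
    using finite_zo_mats by (simp add: card_Diff_subset lss_mats_def card_zo_mats N_e_def N_s_def)
qed

lemma card_block_pairs: "card (block_pairs p) = p * (p - 1) div 2"
proof -
  have "bij_betw (\<lambda>(j, l). {j, l}) (block_pairs p) {S. S \<subseteq> {1..p} \<and> card S = 2}"
  proof (rule bij_betwI')
    show "(case x of (j, l) \<Rightarrow> {j, l}) = (case y of (j, l) \<Rightarrow> {j, l}) \<longleftrightarrow> x = y"
      if "x \<in> block_pairs p" "y \<in> block_pairs p" for x y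
      using that by (auto simp: block_pairs_def doubleton_eq_iff)
    show "(case x of (j, l) \<Rightarrow> {j, l}) \<in> {S. S \<subseteq> {1..p} \<and> card S = 2}" if "x \<in> block_pairs p" for x
      using that by (auto simp: block_pairs_def)
    show "\<exists>x\<in>block_pairs p. S = (case x of (j, l) \<Rightarrow> {j, l})" if "S \<in> {S. S \<subseteq> {1..p} \<and> card S = 2}" for S
    proof -
      from that obtain u v where "S = {u, v}" "u \<noteq> v" "S \<subseteq> {1..p}" by (auto simp: card_2_iff)
      then show ?thesis
        by (intro bexI[of _ "(min u v, max u v)"]) (auto simp: block_pairs_def min_def max_def insert_commute)
    qed
  qed
  then have "card (block_pairs p) = p choose 2" by (simp add: bij_betw_same_card n_subsets)
  then show ?thesis by (simp add: choose_two)
qed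

lemma card_pendant_mats_edges:
  assumes A: "A \<in> pendant_mats p i"
  shows "card {x \<in> block_pairs p. A x = 1} = i"
proof -
  define U where "U = {x \<in> block_pairs p. A x = 1}"
  have zo: "A (j, l) \<in> {0, 1}" if "j \<in> {1..p}" "l \<in> {1..p}" for j l
    using A that zo_mats_entry[of A p j l] unfolding pendant_mats_def by blast
  have sym: "A (j, l) = A (l, j)" if "j \<in> {1..p}" "l \<in> {1..p}" for j l
    using A that unfolding pendant_mats_def by blast
  have diag: "A (j, j) = 0" if "j \<in> {1..p}" for j
    using A that unfolding pendant_mats_def by blast
  have "{x \<in> {1..p} \<times> {1..p}. A x \<noteq> 0} = U \<union> prod.swap ` U"
  proof (intro equalityI subsetI)
    fix x assume "x \<in> {x \<in> {1..p} \<times> {1..p}. A x \<noteq> 0}"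
    then obtain j l where x: "x = (j, l)" "j \<in> {1..p}" "l \<in> {1..p}" "A (j, l) = 1"
      using zo by fastforce
    then have "j \<noteq> l" using diag by auto
    then consider "j < l" | "l < j" by linarith
    then show "x \<in> U \<union> prod.swap ` U"
      by cases (use x sym in \<open>auto simp: U_def block_pairs_def image_iff\<close>)
  next
    fix x assume "x \<in> U \<union> prod.swap ` U"
    then show "x \<in> {x \<in> {1..p} \<times> {1..p}. A x \<noteq> 0}"
      using sym by (auto simp: U_def block_pairs_def)
  qed
  moreover have "U \<inter> prod.swap ` U = {}" by (auto simp: U_def block_pairs_def)
  moreover have "finite U" using finite_block_pairs by (simp add: U_def)
  ultimately have "card {x \<in> {1..p} \<times> {1..p}. A x \<noteq> 0} = 2 * card U"
    by (simp add: card_Un_disjoint card_image)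
  then show ?thesis using A unfolding pendant_mats_def U_def by simp
qed

lemma card_PiE_block_matrix_choices:
  assumes A: "A \<in> pendant_mats p i"
  shows "card (PiE (block_pairs p) (block_matrix_choices q A)) = N_e q ^ i * N_s q ^ (p * (p - 1) div 2 - i)"
proof -
  let ?U = "block_pairs p \<inter> {x. A x = 1}" and ?V = "block_pairs p \<inter> - {x. A x = 1}"
  have "card (PiE (block_pairs p) (block_matrix_choices q A))
      = (\<Prod>x\<in>block_pairs p. if A x = 1 then N_e q else N_s q)"
    unfolding card_PiE[OF finite_block_pairs] block_matrix_choices_def
    by (intro prod.cong refl) (simp add: card_non_lss_mats card_lss_mats)
  also have "\<dots> = (\<Prod>x\<in>?U. N_e q) * (\<Prod>x\<in>?V. N_s q)"
    using finite_block_pairs by (rule prod.If_cases)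
  also have "\<dots> = N_e q ^ card ?U * N_s q ^ card ?V" by simp
  also have "card ?V = card (block_pairs p) - card ?U"
  proof -
    have "?V = block_pairs p - ?U" by blast
    then show ?thesis using finite_block_pairs by (simp add: card_Diff_subset)
  qed
  also have "card ?U = i" using card_pendant_mats_edges[OF A] by (simp add: Int_def)
  finally show ?thesis by (simp add: card_block_pairs)
qed

lemma card_vertex_block: "j \<ge> 1 \<Longrightarrow> card (vertex_block q j) = q"
  unfolding vertex_block_def by (subst card_image) (auto intro!: inj_onI simp: block_vertex_eq_iff)

lemma vertex_blocks_disjoint:
  assumes "j \<ge> 1" "l \<ge> 1" "j \<noteq> l"
  shows "vertex_block q j \<inter> vertex_block q l = {}"
proof -
  have "block_vertex q j a \<noteq> block_vertex q l b" if "a \<in> {1..q}" "b \<in> {1..q}" for a b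
    using assms that block_vertex_eq_iff[of j l a q b] by blast
  then show ?thesis unfolding vertex_block_def by blast
qed

lemma card_intra_block_edges: "card (intra_block_edges p q) = p * q * (q - 1) div 2"
proof -
  let ?edges = "\<lambda>j. {e. e \<subseteq> vertex_block q j \<and> card e = 2}"
  have "card (intra_block_edges p q) = (\<Sum>j\<in>{1..p}. card (?edges j))"
    unfolding intra_block_edges_def
  proof (rule card_UN_disjoint)
    show "\<forall>j\<in>{1..p}. finite (?edges j)"
    proof
      fix j
      have "?edges j \<subseteq> Pow (vertex_block q j)" by blast
      then show "finite (?edges j)" by (rule finite_subset) (simp add: vertex_block_def)
    qed
    show "\<forall>j\<in>{1..p}. \<forall>l\<in>{1..p}. j \<noteq> l \<longrightarrow> ?edges j \<inter> ?edges l = {}"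
    proof (intro ballI impI)
      fix j l assume "j \<in> {1..p}" "l \<in> {1..p}" "j \<noteq> l"
      then have "vertex_block q j \<inter> vertex_block q l = {}" by (intro vertex_blocks_disjoint) auto
      show "?edges j \<inter> ?edges l = {}"
      proof (rule equals0I)
        fix e assume "e \<in> ?edges j \<inter> ?edges l"
        with \<open>vertex_block q j \<inter> vertex_block q l = {}\<close> have "e = {}" "card e = 2" by blast+
        then show False by simp
      qed
    qed
  qed simp
  also have "\<dots> = (\<Sum>j\<in>{1..p}. q choose 2)"
  proof (rule sum.cong[OF refl])
    fix j assume "j \<in> {1..p}"
    moreover have "finite (vertex_block q j)" by (simp add: vertex_block_def)
    ultimately show "card (?edges j) = q choose 2" by (simp add: n_subsets card_vertex_block)
  qed
  also have "\<dots> = p * (q * (q - 1) div 2)" by (simp add: choose_two)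
  also have "\<dots> = p * q * (q - 1) div 2"
  proof -
    have "even (q * (q - 1))" by auto
    then show ?thesis by (simp add: div_mult_swap mult.assoc)
  qed
  finally show ?thesis .
qed

definition block_graph_data :: "nat \<Rightarrow> nat \<Rightarrow> nat \<Rightarrow>
    ((nat \<times> nat \<Rightarrow> nat) \<times> (nat \<times> nat \<Rightarrow> nat \<times> nat \<Rightarrow> nat) \<times> nat set set) set" where
  "block_graph_data p q i = (SIGMA A:pendant_mats p i.
     PiE (block_pairs p) (block_matrix_choices q A) \<times> Pow (intra_block_edges p q))"

definition block_graph :: "nat \<Rightarrow> nat \<Rightarrow>
    (nat \<times> nat \<Rightarrow> nat) \<times> (nat \<times> nat \<Rightarrow> nat \<times> nat \<Rightarrow> nat) \<times> nat set set \<Rightarrow> nat set set" where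
  "block_graph p q = (\<lambda>(A, B, F). F \<union> inter_block_edges p q B)"

lemma block_matrix_entry_iff_edge:
  assumes "F \<subseteq> intra_block_edges p q" and "(j, l) \<in> block_pairs p" "a \<in> {1..q}" "b \<in> {1..q}"
  shows "B (j, l) (a, b) = 1 \<longleftrightarrow> {block_vertex q j a, block_vertex q l b} \<in> F \<union> inter_block_edges p q B"
  using assms Un_inter_block_edge_iff[of F p q j l a b B]
  by (auto simp: block_pairs_def cross_block_def)

lemma pendant_mats_eqI:
  assumes "A \<in> pendant_mats p i" "A' \<in> pendant_mats p i'"
    and "\<And>x. x \<in> block_pairs p \<Longrightarrow> A x = 1 \<longleftrightarrow> A' x = 1"
  shows "A = A'"
proof (rule zo_mats_eqI)
  show "A \<in> zo_mats p" "A' \<in> zo_mats p" using assms(1,2) unfolding pendant_mats_def by blast+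
  fix j l assume jl: "j \<in> {1..p}" "l \<in> {1..p}"
  consider "j = l" | "j < l" | "l < j" by linarith
  then show "A (j, l) = 1 \<longleftrightarrow> A' (j, l) = 1"
  proof cases
    case 1
    then show ?thesis using assms(1,2) jl unfolding pendant_mats_def by simp
  next
    case 2
    then show ?thesis using assms(3) jl by (simp add: block_pairs_def)
  next
    case 3
    then have "A (l, j) = 1 \<longleftrightarrow> A' (l, j) = 1" using assms(3) jl by (simp add: block_pairs_def)
    moreover have "A (j, l) = A (l, j)" "A' (j, l) = A' (l, j)"
      using assms(1,2) jl unfolding pendant_mats_def by blast+
    ultimately show ?thesis by simp
  qed
qed

lemma inj_on_block_graph: "inj_on (block_graph p q) (\<Union>i. block_graph_data p q i)"
proof (rule inj_onI)
  fix t t' assume "t \<in> (\<Union>i. block_graph_data p q i)" "t' \<in> (\<Union>i. block_graph_data p q i)"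
    and eq: "block_graph p q t = block_graph p q t'"
  then obtain i i' A B F A' B' F' where t: "t = (A, B, F)" "t' = (A', B', F')"
    and A: "A \<in> pendant_mats p i" and A': "A' \<in> pendant_mats p i'"
    and B: "B \<in> PiE (block_pairs p) (block_matrix_choices q A)"
    and B': "B' \<in> PiE (block_pairs p) (block_matrix_choices q A')"
    and F: "F \<subseteq> intra_block_edges p q" and F': "F' \<subseteq> intra_block_edges p q"
    unfolding block_graph_data_def by auto
  define E where "E = F \<union> inter_block_edges p q B"
  have E': "E = F' \<union> inter_block_edges p q B'" using eq unfolding E_def t block_graph_def by simp
  have "F = E \<inter> intra_block_edges p q"
    using F inter_block_edges_disjoint[of p q B] unfolding E_def by blast
  moreover have "F' = E \<inter> intra_block_edges p q"
    using F' inter_block_edges_disjoint[of p q B'] unfolding E' by blast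
  ultimately have "F = F'" by simp
  have "B x = B' x" for x
  proof (cases "x \<in> block_pairs p")
    case True
    then obtain j l where x: "x = (j, l)" by (cases x)
    show ?thesis
    proof (rule zo_mats_eqI)
      show "B x \<in> zo_mats q" "B' x \<in> zo_mats q"
        using True B B' by (simp_all add: block_matrix_in_zo_mats)
      show "B x (a, b) = 1 \<longleftrightarrow> B' x (a, b) = 1" if "a \<in> {1..q}" "b \<in> {1..q}" for a b
        using block_matrix_entry_iff_edge[OF F, of j l a b B] block_matrix_entry_iff_edge[OF F', of j l a b B']
          True that x unfolding E_def[symmetric] E'[symmetric] by simp
    qed
  next
    case False
    then show ?thesis using PiE_arb[OF B False] PiE_arb[OF B' False] by simp
  qed
  then have "B = B'" by blast
  have "A x = 1 \<longleftrightarrow> A' x = 1" if "x \<in> block_pairs p" for x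
    using B B' that \<open>B = B'\<close>
    by (auto simp: PiE_iff block_matrix_choices_def lss_mats_def non_lss_mats_def split: if_splits)
  then have "A = A'" using A A' by (rule pendant_mats_eqI[rotated 2])
  with \<open>B = B'\<close> \<open>F = F'\<close> show "t = t'" unfolding t by simp
qed

lemma finite_pendant_mats: "finite (pendant_mats p i)"
  by (rule finite_subset[OF _ finite_zo_mats]) (auto simp: pendant_mats_def)

lemma finite_PiE_block_matrix_choices: "finite (PiE (block_pairs p) (block_matrix_choices q A))"
  using finite_block_pairs finite_zo_mats
  by (intro finite_PiE) (auto simp: block_matrix_choices_def lss_mats_def non_lss_mats_def)

lemma finite_block_graph_data: "finite (block_graph_data p q i)"
  unfolding block_graph_data_def
  using finite_pendant_mats finite_PiE_block_matrix_choices finite_intra_block_edges by blast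

lemma card_block_graph_data:
  "card (block_graph_data p q i) =
    M p i * N_e q ^ i * N_s q ^ (p * (p - 1) div 2 - i) * 2 ^ (p * q * (q - 1) div 2)"
proof -
  have "card (block_graph_data p q i) = (\<Sum>A\<in>pendant_mats p i.
      card (PiE (block_pairs p) (block_matrix_choices q A)) * card (Pow (intra_block_edges p q)))"
    unfolding block_graph_data_def
    using finite_pendant_mats finite_PiE_block_matrix_choices finite_intra_block_edges
    by (simp add: card_SigmaI card_cartesian_product)
  also have "\<dots> = card (pendant_mats p i) * (N_e q ^ i * N_s q ^ (p * (p - 1) div 2 - i) * 2 ^ (p * q * (q - 1) div 2))"
    by (simp add: card_PiE_block_matrix_choices card_Pow finite_intra_block_edges card_intra_block_edges)
  also have "card (pendant_mats p i) = M p i" unfolding pendant_mats_def M_def ..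
  finally show ?thesis by (simp add: mult.assoc)
qed

theorem mainTheorem3:
  fixes p q :: nat
  assumes "p \<ge> 1" and "q \<ge> 1"
  shows "L_e p q \<ge>
    (\<Sum>i = 1..(p - 1) * (p - 2) div 2 + 1.
        M p i * N_e q ^ i * N_s q ^ (p * (p - 1) div 2 - i) * 2 ^ (p * q * (q - 1) div 2))"
proof -
  let ?I = "{1..(p - 1) * (p - 2) div 2 + 1}"
  let ?Ent = "{E \<in> graphs (p*q). E \<noteq> {} \<and> \<not> separable p q (normalized_laplacian (p*q) E)}"
  have disjoint: "block_graph_data p q i \<inter> block_graph_data p q i' = {}" if "i \<noteq> i'" for i i'
    using that unfolding block_graph_data_def pendant_mats_def by auto
  have "(\<Sum>i\<in>?I. M p i * N_e q ^ i * N_s q ^ (p * (p - 1) div 2 - i) * 2 ^ (p * q * (q - 1) div 2))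
      = card (\<Union>i\<in>?I. block_graph_data p q i)"
    using disjoint by (simp add: card_UN_disjoint finite_block_graph_data card_block_graph_data)
  also have "\<dots> = card (block_graph p q ` (\<Union>i\<in>?I. block_graph_data p q i))"
    by (rule card_image[symmetric], rule inj_on_subset[OF inj_on_block_graph]) auto
  also have "\<dots> \<le> card ?Ent"
  proof (rule card_mono)
    show "finite ?Ent" using finite_graphs by simp
    show "block_graph p q ` (\<Union>i\<in>?I. block_graph_data p q i) \<subseteq> ?Ent"
      using Un_inter_block_edges_in_graphs block_graph_entangled
      by (fastforce simp: block_graph_data_def block_graph_def)
  qed
  finally show ?thesis unfolding L_e_def .
qed

end
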